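(* Let $K\in\mathbb{N}$ and let $\mathcal{P}$ be a family of probability density functions on $\mathbb{R}^K$ such that every $p\in\mathcal{P}$ has finite differential entropy $h(p) := -\int p(\mathbf{x})\log p(\mathbf{x})\,\mathrm{d}\mathbf{x}\in\mathbb{R}$. Assume that $\mathcal{P}$ is convex (for all $\alpha\in[0,1]$ and $p,q\in\mathcal{P}$ we have $\alpha p+(1-\alpha)q\in\mathcal{P}$) and that $\sup_{q\in\mathcal{P}}|h(q)|=\infty$. Fix a sample size $N\in\mathbb{N}$ and an arbitrary (measurable) estimator $\hat h\colon(\mathbb{R}^K)^N\to\mathbb{R}$. Then for any pair of constants $C,\delta>0$ there exists a continuous random vector $\mathbf{x}\sim p\in\mathcal{P}$ such that, with $\mathcal{D}=(\mathbf{x}_1,\dots,\mathbf{x}_N)$ consisting of $N$ i.i.d. copies of $\mathbf{x}$, \[ \Pr\big(|h(p)-\hat h(\mathcal{D})|\le C\big)\le\delta . \]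
   Context: Differential entropy of a density $p$ on $\mathbb{R}^K$ is $h(p)=-\int p\log p\,\mathrm{d}\lambda^K$, where $\lambda^K$ is Lebesgue measure. *)

theory Defs
  imports "HOL-Probability.Probability"
begin

definition is_pdf :: "('a::euclidean_space \<Rightarrow> real) \<Rightarrow> bool" where
  "is_pdf p \<longleftrightarrow> p \<in> borel_measurable lborel \<and> (\<forall>x. 0 \<le> p x) \<and>
     integrable lborel p \<and> integral\<^sup>L lborel p = 1"

text \<open>Finiteness of differential entropy: p log p is Lebesgue integrable
  (convention 0 log 0 = 0, which matches ln 0 = 0 in Isabelle).\<close>
definition finite_entropy :: "('a::euclidean_space \<Rightarrow> real) \<Rightarrow> bool" where
  "finite_entropy p \<longleftrightarrow> integrable lborel (\<lambda>x. p x * ln (p x))"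

definition diff_entropy :: "('a::euclidean_space \<Rightarrow> real) \<Rightarrow> real" where
  "diff_entropy p = - (\<integral>x. p x * ln (p x) \<partial>lborel)"

definition sample_measure :: "nat \<Rightarrow> ('a::euclidean_space \<Rightarrow> real) \<Rightarrow> (nat \<Rightarrow> 'a) measure" where
  "sample_measure N p = PiM {..<N} (\<lambda>_. density lborel (\<lambda>x. ennreal (p x)))"

end

theory Submission
  imports Defs
begin

text \<open>Fix \<open>p \<in> P\<close> and a small weight \<open>\<alpha>\<close>. The mixtures \<open>(1 - \<alpha>) p + \<alpha> r\<close>, \<open>r \<in> P\<close>, lie in \<open>P\<close>,
  and since the entropy of a mixture differs from the mixed entropies by at most the binary entropy
  of \<open>\<alpha>\<close>, their entropies are still unbounded. Choose \<open>M\<close> of them whose entropies are more than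
  \<open>2 C\<close> apart. The events ``the estimate is within \<open>C\<close> of the \<open>k\<close>-th entropy'' are then disjoint, so
  one of them has probability at most \<open>1 / M\<close> under \<open>p\<^sup>N\<close>. As the \<open>k\<close>-th mixture dominates
  \<open>(1 - \<alpha>) p\<close>, its sample law differs from \<open>p\<^sup>N\<close> by at most \<open>1 - (1 - \<alpha>)\<^sup>N \<le> N \<alpha>\<close> on any event.\<close>

lemma (in product_sigma_finite) PiM_density:
  assumes I: "finite I"
    and f[measurable]: "\<And>i. i \<in> I \<Longrightarrow> f i \<in> borel_measurable (M i)"
    and sf: "product_sigma_finite (\<lambda>i. density (M i) (f i))"
  shows "PiM I (\<lambda>i. density (M i) (f i)) = density (PiM I M) (\<lambda>x. \<Prod>i\<in>I. f i (x i))"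
proof -
  interpret D: product_sigma_finite "\<lambda>i. density (M i) (f i)" by (rule sf)
  have "density (PiM I M) (\<lambda>x. \<Prod>i\<in>I. f i (x i)) = PiM I (\<lambda>i. density (M i) (f i))"
  proof (rule D.PiM_eqI[OF I])
    show "sets (density (PiM I M) (\<lambda>x. \<Prod>i\<in>I. f i (x i))) = sets (PiM I (\<lambda>i. density (M i) (f i)))"
      by (auto intro!: sets_PiM_cong)
  next
    fix A assume A: "\<And>i. i \<in> I \<Longrightarrow> A i \<in> sets (density (M i) (f i))"
    then have A'[measurable]: "\<And>i. i \<in> I \<Longrightarrow> A i \<in> sets (M i)" by simp
    have box: "Pi\<^sub>E I A \<in> sets (PiM I M)"
      using A' by (intro sets_PiM_I_finite I) auto
    have "emeasure (density (PiM I M) (\<lambda>x. \<Prod>i\<in>I. f i (x i))) (Pi\<^sub>E I A)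
        = (\<integral>\<^sup>+x. (\<Prod>i\<in>I. f i (x i) * indicator (A i) (x i)) \<partial>PiM I M)"
      using box I
      by (auto simp: emeasure_density indicator_def prod.distrib PiE_iff space_PiM
               intro!: nn_integral_cong)
    also have "\<dots> = (\<Prod>i\<in>I. emeasure (density (M i) (f i)) (A i))"
      using I by (subst product_nn_integral_prod) (auto simp: emeasure_density)
    finally show "emeasure (density (PiM I M) (\<lambda>x. \<Prod>i\<in>I. f i (x i))) (Pi\<^sub>E I A)
        = (\<Prod>i\<in>I. emeasure (density (M i) (f i)) (A i))" .
  qed
  then show ?thesis ..
qed

lemma prob_space_density_pdf:
  assumes "is_pdf p"
  shows "prob_space (density lborel (\<lambda>x. ennreal (p x)))"
proof
  have "emeasure (density lborel (\<lambda>x. ennreal (p x))) UNIV = ennreal (integral\<^sup>L lborel p)"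
    using assms by (simp add: is_pdf_def emeasure_density nn_integral_eq_integral)
  then show "emeasure (density lborel (\<lambda>x. ennreal (p x))) (space (density lborel (\<lambda>x. ennreal (p x)))) = 1"
    using assms by (simp add: is_pdf_def)
qed

lemma prob_space_sample_measure: "is_pdf p \<Longrightarrow> prob_space (sample_measure N p)"
  unfolding sample_measure_def by (intro prob_space_PiM prob_space_density_pdf)

lemma sets_sample_measure [simp]:
  "sets (sample_measure N p) = sets (PiM {..<N} (\<lambda>_. lborel))"
  unfolding sample_measure_def by (intro sets_PiM_cong) auto

lemma space_sample_measure:
  "space (sample_measure N p) = space (PiM {..<N} (\<lambda>_. lborel))"
  by (rule sets_eq_imp_space_eq[OF sets_sample_measure])

lemma sample_measure_eq_density:
  assumes "is_pdf p"
  shows "sample_measure N p = density (PiM {..<N} (\<lambda>_. lborel)) (\<lambda>x. \<Prod>i<N. ennreal (p (x i)))"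
proof -
  interpret D: prob_space "density lborel (\<lambda>x. ennreal (p x))"
    using assms by (rule prob_space_density_pdf)
  interpret product_sigma_finite "\<lambda>_::nat. lborel :: 'a measure" ..
  have "product_sigma_finite (\<lambda>_::nat. density lborel (\<lambda>x. ennreal (p x)))"
    by (simp add: product_sigma_finite_def D.sigma_finite_measure_axioms)
  with assms show ?thesis
    unfolding sample_measure_def by (intro PiM_density) (auto simp: is_pdf_def)
qed

lemma sample_measure_dominated:
  assumes p: "is_pdf p" and q: "is_pdf q" and c: "0 \<le> c" and le: "\<And>x. c * p x \<le> q x"
    and B: "B \<in> sets (sample_measure N p)"
  shows "c ^ N * measure (sample_measure N p) B \<le> measure (sample_measure N q) B"
proof -
  interpret SP: prob_space "sample_measure N p" using p by (rule prob_space_sample_measure)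
  interpret SQ: prob_space "sample_measure N q" using q by (rule prob_space_sample_measure)
  have [measurable]: "p \<in> borel_measurable borel" "q \<in> borel_measurable borel"
    using p q by (auto simp: is_pdf_def)
  have [measurable]: "B \<in> sets (PiM {..<N} (\<lambda>_. lborel))" using B by simp
  have "(\<Prod>i<N. ennreal (c * p (x i))) \<le> (\<Prod>i<N. ennreal (q (x i)))" for x
    by (intro prod_mono_ennreal ennreal_leI le)
  moreover have "(\<Prod>i<N. ennreal (c * p (x i))) = ennreal (c ^ N) * (\<Prod>i<N. ennreal (p (x i)))" for x
    using p c by (simp add: is_pdf_def ennreal_mult' prod.distrib ennreal_power)
  ultimately have "ennreal (c ^ N) * ((\<Prod>i<N. ennreal (p (x i))) * indicator B x)
      \<le> (\<Prod>i<N. ennreal (q (x i))) * indicator B x" for x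
    by (metis mult.assoc mult_right_mono zero_le)
  then have "ennreal (c ^ N) * emeasure (sample_measure N p) B \<le> emeasure (sample_measure N q) B"
    unfolding sample_measure_eq_density[OF p] sample_measure_eq_density[OF q]
    by (simp add: emeasure_density nn_integral_cmult[symmetric] nn_integral_mono)
  then show ?thesis
    using c by (simp add: SP.emeasure_eq_measure SQ.emeasure_eq_measure ennreal_mult'[symmetric] ennreal_le_iff)
qed

lemma sample_measure_le_of_dominated:
  assumes p: "is_pdf p" and q: "is_pdf q" and \<alpha>: "0 \<le> \<alpha>" "\<alpha> \<le> 1"
    and le: "\<And>x. (1 - \<alpha>) * p x \<le> q x" and B: "B \<in> sets (sample_measure N p)"
  shows "measure (sample_measure N q) B \<le> measure (sample_measure N p) B + N * \<alpha>"
proof -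
  interpret SP: prob_space "sample_measure N p" using p by (rule prob_space_sample_measure)
  interpret SQ: prob_space "sample_measure N q" using q by (rule prob_space_sample_measure)
  let ?c = "(1 - \<alpha>) ^ N" and ?B' = "space (sample_measure N p) - B"
  have B': "?B' \<in> sets (sample_measure N p)" using B by (rule sets.compl_sets)
  have "?c * SP.prob ?B' \<le> SQ.prob ?B'"
    using \<alpha> by (intro sample_measure_dominated[OF p q _ le B']) auto
  moreover have "SP.prob ?B' = 1 - SP.prob B" using SP.prob_compl[OF B] .
  moreover have "SQ.prob ?B' = 1 - SQ.prob B"
    using SQ.prob_compl[of B] B by (simp add: space_sample_measure)
  moreover have "1 - N * \<alpha> \<le> ?c"
    using Bernoulli_inequality[of "- \<alpha>" N] \<alpha> by simp
  moreover have "?c * SP.prob B \<le> SP.prob B"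
    using \<alpha> by (simp add: mult_left_le_one_le power_le_one)
  ultimately show ?thesis by (simp add: right_diff_distrib)
qed

lemma mult_ln_tangent_le:
  fixes a m :: real
  assumes "0 \<le> a" "0 < m"
  shows "a * ln m + (a - m) \<le> a * ln a"
proof (cases "a = 0")
  case False
  with assms have a: "0 < a" by simp
  have "a * ln (m / a) \<le> a * (m / a - 1)"
    using a assms by (intro mult_left_mono ln_le_minus_one) auto
  also have "a * ln (m / a) = a * ln m - a * ln a"
    using a assms by (simp add: ln_div right_diff_distrib)
  also have "a * (m / a - 1) = m - a"
    using a by (simp add: field_simps)
  finally show ?thesis by simp
qed (use assms in simp)

lemma mult_ln_convex:
  fixes a b t :: real
  assumes "0 \<le> a" "0 \<le> b" "0 \<le> t" "t \<le> 1"
  shows "(t * a + (1 - t) * b) * ln (t * a + (1 - t) * b) \<le> t * (a * ln a) + (1 - t) * (b * ln b)"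
proof -
  define m where "m = t * a + (1 - t) * b"
  have "0 \<le> m" unfolding m_def using assms by simp
  show ?thesis
  proof (cases "m = 0")
    case True
    then have "t * a = 0" "(1 - t) * b = 0"
      unfolding m_def using assms by (simp_all add: add_nonneg_eq_0_iff)
    then have "t * (a * ln a) = 0" "(1 - t) * (b * ln b) = 0"
      by (simp_all only: mult.assoc[symmetric] mult_zero_left)
    moreover have "m * ln m = 0" using True by simp
    ultimately show ?thesis unfolding m_def[symmetric] by linarith
  next
    case False
    with \<open>0 \<le> m\<close> have m: "0 < m" by simp
    have "t * (a * ln m + (a - m)) + (1 - t) * (b * ln m + (b - m)) \<le> t * (a * ln a) + (1 - t) * (b * ln b)"
      using assms m by (intro add_mono mult_left_mono mult_ln_tangent_le) auto
    moreover have "t * (a * ln m + (a - m)) + (1 - t) * (b * ln m + (b - m)) = m * ln m"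
      unfolding m_def by (simp add: algebra_simps)
    ultimately show ?thesis unfolding m_def by simp
  qed
qed

lemma mult_ln_superadditive:
  fixes s u :: real
  assumes "0 \<le> s" "0 \<le> u"
  shows "s * ln s + u * ln u \<le> (s + u) * ln (s + u)"
proof -
  have "s * ln s \<le> s * ln (s + u)" "u * ln u \<le> u * ln (s + u)"
    using assms by (cases "s = 0"; cases "u = 0"; auto intro!: mult_left_mono)+
  then show ?thesis by (simp add: distrib_right)
qed

lemma mult_ln_scale:
  fixes a c :: real
  assumes "0 \<le> a" "0 < c"
  shows "(c * a) * ln (c * a) = c * (a * ln a) + c * ln c * a"
  using assms by (cases "a = 0") (auto simp: ln_mult algebra_simps)

lemma diff_entropy_mixture:
  fixes p r :: "'a::euclidean_space \<Rightarrow> real"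
  assumes p: "is_pdf p" "finite_entropy p" and r: "is_pdf r" "finite_entropy r"
    and \<alpha>: "0 < \<alpha>" "\<alpha> < 1"
  defines "q \<equiv> \<lambda>x. (1 - \<alpha>) * p x + \<alpha> * r x"
  shows finite_entropy_mixture: "finite_entropy q"
    and diff_entropy_mixture_ge: "(1 - \<alpha>) * diff_entropy p + \<alpha> * diff_entropy r \<le> diff_entropy q"
    and diff_entropy_mixture_le: "diff_entropy q
          \<le> (1 - \<alpha>) * diff_entropy p + \<alpha> * diff_entropy r - (1 - \<alpha>) * ln (1 - \<alpha>) - \<alpha> * ln \<alpha>"
proof -
  have [measurable]: "p \<in> borel_measurable borel" "r \<in> borel_measurable borel"
    and [simp]: "integrable lborel p" "integrable lborel r" "integral\<^sup>L lborel p = 1" "integral\<^sup>L lborel r = 1"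
    and nonneg: "\<And>x. 0 \<le> p x" "\<And>x. 0 \<le> r x"
    using p r by (auto simp: is_pdf_def)
  have [simp]: "integrable lborel (\<lambda>x. p x * ln (p x))" "integrable lborel (\<lambda>x. r x * ln (r x))"
    using p r by (auto simp: finite_entropy_def)
  define up where "up x = (1 - \<alpha>) * (p x * ln (p x)) + \<alpha> * (r x * ln (r x))" for x
  define lo where "lo x = up x + (1 - \<alpha>) * ln (1 - \<alpha>) * p x + \<alpha> * ln \<alpha> * r x" for x
  have int_up: "integrable lborel up" and int_lo: "integrable lborel lo"
    unfolding up_def lo_def by simp_all
  have le_up: "q x * ln (q x) \<le> up x" for x
    unfolding q_def up_def using mult_ln_convex[OF nonneg(1,2), of "1 - \<alpha>" x x] \<alpha> by simp
  have ge_lo: "lo x \<le> q x * ln (q x)" for x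
  proof -
    have "lo x = ((1 - \<alpha>) * p x) * ln ((1 - \<alpha>) * p x) + (\<alpha> * r x) * ln (\<alpha> * r x)"
      unfolding lo_def up_def using \<alpha> nonneg[of x] by (simp add: mult_ln_scale)
    also have "\<dots> \<le> q x * ln (q x)"
      unfolding q_def using \<alpha> nonneg[of x] by (intro mult_ln_superadditive) auto
    finally show ?thesis .
  qed
  have int_q: "integrable lborel (\<lambda>x. q x * ln (q x))"
  proof (rule Bochner_Integration.integrable_bound)
    show "integrable lborel (\<lambda>x. \<bar>lo x\<bar> + \<bar>up x\<bar>)" using int_lo int_up by simp
    have "norm (q x * ln (q x)) \<le> norm (\<bar>lo x\<bar> + \<bar>up x\<bar>)" for x
      using le_up[of x] ge_lo[of x] by (simp add: abs_le_iff) arith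
    then show "AE x in lborel. norm (q x * ln (q x)) \<le> norm (\<bar>lo x\<bar> + \<bar>up x\<bar>)"
      by simp
  qed (simp add: q_def)
  then show "finite_entropy q" by (simp add: finite_entropy_def)
  have "integral\<^sup>L lborel lo \<le> (\<integral>x. q x * ln (q x) \<partial>lborel)"
    using int_lo int_q ge_lo by (rule integral_mono)
  moreover have "(\<integral>x. q x * ln (q x) \<partial>lborel) \<le> integral\<^sup>L lborel up"
    using int_q int_up le_up by (rule integral_mono)
  moreover have "integral\<^sup>L lborel up = - ((1 - \<alpha>) * diff_entropy p + \<alpha> * diff_entropy r)"
    unfolding up_def diff_entropy_def by simp
  moreover have "integral\<^sup>L lborel lo = integral\<^sup>L lborel up + (1 - \<alpha>) * ln (1 - \<alpha>) + \<alpha> * ln \<alpha>"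
    unfolding lo_def[abs_def] using int_up by simp
  ultimately show "(1 - \<alpha>) * diff_entropy p + \<alpha> * diff_entropy r \<le> diff_entropy q"
    and "diff_entropy q \<le> (1 - \<alpha>) * diff_entropy p + \<alpha> * diff_entropy r - (1 - \<alpha>) * ln (1 - \<alpha>) - \<alpha> * ln \<alpha>"
    unfolding diff_entropy_def by linarith+
qed

lemma not_bdd_above_diff_entropy_mixture:
  fixes p :: "'a::euclidean_space \<Rightarrow> real"
  assumes P: "\<And>r. r \<in> P \<Longrightarrow> is_pdf r \<and> finite_entropy r"
    and unbounded: "\<not> bdd_above ((\<lambda>r. \<bar>diff_entropy r\<bar>) ` P)"
    and p: "is_pdf p" "finite_entropy p" and \<alpha>: "0 < \<alpha>" "\<alpha> < 1"
  shows "\<not> bdd_above ((\<lambda>r. \<bar>diff_entropy (\<lambda>x. (1 - \<alpha>) * p x + \<alpha> * r x)\<bar>) ` P)"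
proof
  assume "bdd_above ((\<lambda>r. \<bar>diff_entropy (\<lambda>x. (1 - \<alpha>) * p x + \<alpha> * r x)\<bar>) ` P)"
  then obtain B where B: "\<And>r. r \<in> P \<Longrightarrow> \<bar>diff_entropy (\<lambda>x. (1 - \<alpha>) * p x + \<alpha> * r x)\<bar> \<le> B"
    by (auto simp: bdd_above_def)
  define K where "K = B + \<bar>(1 - \<alpha>) * diff_entropy p\<bar> + \<bar>(1 - \<alpha>) * ln (1 - \<alpha>)\<bar> + \<bar>\<alpha> * ln \<alpha>\<bar>"
  have "\<bar>diff_entropy r\<bar> \<le> K / \<alpha>" if "r \<in> P" for r
  proof -
    have r: "is_pdf r" "finite_entropy r" using P[OF that] by auto
    have "\<alpha> * diff_entropy r \<le> K" "- (\<alpha> * diff_entropy r) \<le> K"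
      using diff_entropy_mixture_ge[OF p r \<alpha>] diff_entropy_mixture_le[OF p r \<alpha>] B[OF that]
        abs_ge_self[of "(1 - \<alpha>) * diff_entropy p"] abs_ge_minus_self[of "(1 - \<alpha>) * diff_entropy p"]
        abs_ge_minus_self[of "(1 - \<alpha>) * ln (1 - \<alpha>)"] abs_ge_minus_self[of "\<alpha> * ln \<alpha>"]
      unfolding K_def abs_le_iff by linarith+
    then have "\<alpha> * \<bar>diff_entropy r\<bar> \<le> K"
      using \<alpha> by (simp add: abs_le_iff abs_mult)
    with \<alpha> show ?thesis by (simp add: field_simps)
  qed
  then have "bdd_above ((\<lambda>r. \<bar>diff_entropy r\<bar>) ` P)" by (rule bdd_aboveI2)
  with unbounded show False ..
qed

lemma unbounded_abs_obtain_separated_seq: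
  fixes f :: "'b \<Rightarrow> real"
  assumes unbounded: "\<not> bdd_above ((\<lambda>a. \<bar>f a\<bar>) ` A)" and d: "0 \<le> d"
  obtains s :: "nat \<Rightarrow> 'b" where "\<And>k. s k \<in> A" "\<And>j k. j \<noteq> k \<Longrightarrow> d < \<bar>f (s j) - f (s k)\<bar>"
proof -
  have "\<exists>a\<in>A. B < \<bar>f a\<bar>" for B
    using unbounded by (auto simp: bdd_above_def not_le)
  then obtain g where g: "\<And>B. g B \<in> A" "\<And>B. B < \<bar>f (g B)\<bar>" by metis
  define s where "s = rec_nat (g 0) (\<lambda>_ a. g (\<bar>f a\<bar> + d))"
  have sA: "s k \<in> A" for k by (cases k) (simp_all add: s_def g)
  have step: "\<bar>f (s k)\<bar> + d < \<bar>f (s (Suc k))\<bar>" for k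
    unfolding s_def using g(2) by simp
  have "incseq (\<lambda>k. \<bar>f (s k)\<bar>)"
  proof (rule incseq_SucI)
    show "\<bar>f (s k)\<bar> \<le> \<bar>f (s (Suc k))\<bar>" for k using step[of k] d by linarith
  qed
  then have far: "\<bar>f (s j)\<bar> + d < \<bar>f (s k)\<bar>" if "j < k" for j k
    using step[of j] incseqD[of _ "Suc j" k] that by fastforce
  have sep: "d < \<bar>f (s j) - f (s k)\<bar>" if "j \<noteq> k" for j k
    using far[of j k] far[of k j] that by (cases "j < k") auto
  show ?thesis by (rule that[OF sA sep])
qed

lemma (in prob_space) disjoint_family_obtain_small_prob:
  fixes n :: nat
  assumes disj: "disjoint_family_on E {..<n}" and E: "\<And>k. k < n \<Longrightarrow> E k \<in> events"
    and n: "0 < n"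
  obtains k where "k < n" "prob (E k) \<le> 1 / n"
proof (rule ccontr)
  assume "\<not> thesis"
  with that have "\<And>k. k \<in> {..<n} \<Longrightarrow> 1 / n < prob (E k)" by force
  with n have "(\<Sum>k<n. 1 / real n) < (\<Sum>k<n. prob (E k))"
    by (intro sum_strict_mono) auto
  also have "\<dots> = prob (\<Union>k<n. E k)"
    using disj E by (intro finite_measure_finite_Union[symmetric]) auto
  also have "\<dots> \<le> 1" by (rule prob_le_1)
  finally show False using n by simp
qed

lemma estimator_inaccurate_on_separated_family:
  fixes p :: "'a::euclidean_space \<Rightarrow> real" and q :: "nat \<Rightarrow> 'a \<Rightarrow> real"
    and \<theta> :: "nat \<Rightarrow> real" and hhat :: "(nat \<Rightarrow> 'a) \<Rightarrow> real" and M :: nat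
  assumes p: "is_pdf p" and q: "\<And>k. k < M \<Longrightarrow> is_pdf (q k)"
    and dominated: "\<And>k x. k < M \<Longrightarrow> (1 - \<alpha>) * p x \<le> q k x" and \<alpha>: "0 \<le> \<alpha>" "\<alpha> \<le> 1"
    and separated: "\<And>j k. j < M \<Longrightarrow> k < M \<Longrightarrow> j \<noteq> k \<Longrightarrow> 2 * C < \<bar>\<theta> j - \<theta> k\<bar>"
    and meas: "hhat \<in> borel_measurable (PiM {..<N} (\<lambda>_. lborel))" and M: "0 < M"
  obtains k where "k < M"
    "measure (sample_measure N (q k)) {D \<in> space (sample_measure N (q k)). \<bar>\<theta> k - hhat D\<bar> \<le> C}
       \<le> 1 / M + N * \<alpha>"
proof -
  interpret S: prob_space "sample_measure N p" using p by (rule prob_space_sample_measure)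
  define E where "E k = {D \<in> space (sample_measure N p). \<bar>\<theta> k - hhat D\<bar> \<le> C}" for k
  have [measurable]: "hhat \<in> borel_measurable (sample_measure N p)"
    using meas by (subst measurable_cong_sets[OF sets_sample_measure refl])
  have E_sets: "E k \<in> S.events" for k
    unfolding E_def by measurable
  have "disjoint_family_on E {..<M}"
    using separated by (fastforce simp: disjoint_family_on_def E_def)
  then obtain k where k: "k < M" "S.prob (E k) \<le> 1 / M"
    using S.disjoint_family_obtain_small_prob E_sets M by metis
  have "{D \<in> space (sample_measure N (q k)). \<bar>\<theta> k - hhat D\<bar> \<le> C} = E k"
    by (simp add: E_def space_sample_measure)
  moreover have "measure (sample_measure N (q k)) (E k) \<le> S.prob (E k) + N * \<alpha>"
    using p q[OF k(1)] \<alpha> dominated[OF k(1)] E_sets by (rule sample_measure_le_of_dominated)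
  ultimately show ?thesis using k by (intro that) auto
qed

theorem proposition1:
  fixes P :: "('a::euclidean_space \<Rightarrow> real) set"
    and N :: nat
    and hhat :: "(nat \<Rightarrow> 'a) \<Rightarrow> real"
    and C \<delta> :: real
  assumes pdfs: "\<forall>p\<in>P. is_pdf p \<and> finite_entropy p"
    and convex: "\<forall>\<alpha>\<in>{0..1}. \<forall>p\<in>P. \<forall>q\<in>P. (\<lambda>x. \<alpha> * p x + (1 - \<alpha>) * q x) \<in> P"
    and unbounded: "\<not> bdd_above ((\<lambda>q. \<bar>diff_entropy q\<bar>) ` P)"
    and meas: "hhat \<in> borel_measurable (PiM {..<N} (\<lambda>_. lborel))"
    and C: "C > 0" and \<delta>: "\<delta> > 0"
  shows "\<exists>p\<in>P. measure (sample_measure N p)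
            {D \<in> space (sample_measure N p). \<bar>diff_entropy p - hhat D\<bar> \<le> C} \<le> \<delta>"
proof -
  obtain p where p: "p \<in> P"
    using unbounded by fastforce
  define \<alpha> where "\<alpha> = min (1 / 2) (\<delta> / (2 * (N + 1)))"
  have \<alpha>: "0 < \<alpha>" "\<alpha> < 1" "N * \<alpha> \<le> \<delta> / 2"
    using \<delta> by (auto simp: \<alpha>_def min_def field_simps)
  define mix where "mix r = (\<lambda>x. (1 - \<alpha>) * p x + \<alpha> * r x)" for r
  have mix: "mix r \<in> P" if "r \<in> P" for r
    using convex[rule_format, of "1 - \<alpha>" p r] \<alpha> p that by (simp add: mix_def)
  have "\<not> bdd_above ((\<lambda>r. \<bar>diff_entropy (mix r)\<bar>) ` P)"
    unfolding mix_def using pdfs unbounded p \<alpha> by (intro not_bdd_above_diff_entropy_mixture) auto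
  then obtain s :: "nat \<Rightarrow> 'a \<Rightarrow> real" where s: "\<And>k. s k \<in> P"
    and separated: "\<And>j k. j \<noteq> k \<Longrightarrow> 2 * C < \<bar>diff_entropy (mix (s j)) - diff_entropy (mix (s k))\<bar>"
    using C by (elim unbounded_abs_obtain_separated_seq[where d = "2 * C"]) auto
  have dominated: "(1 - \<alpha>) * p x \<le> mix (s k) x" for k x
    using pdfs s \<alpha> by (simp add: mix_def is_pdf_def)
  define M :: nat where "M = nat \<lceil>2 / \<delta>\<rceil> + 1"
  have "0 < M" "2 / \<delta> \<le> M" unfolding M_def by linarith+
  then have M: "0 < M" "1 / M \<le> \<delta> / 2"
    using \<delta> by (simp_all add: field_simps)
  obtain k where "k < M" "measure (sample_measure N (mix (s k)))
      {D \<in> space (sample_measure N (mix (s k))). \<bar>diff_entropy (mix (s k)) - hhat D\<bar> \<le> C} \<le> 1 / M + N * \<alpha>"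
    by (rule estimator_inaccurate_on_separated_family[where q = "\<lambda>k. mix (s k)" and \<alpha> = \<alpha> and C = C])
       (use pdfs p mix[OF s] \<alpha> dominated separated meas M in auto)
  moreover have "1 / M + N * \<alpha> \<le> \<delta>" using M \<alpha> by linarith
  ultimately show ?thesis using mix[OF s] by (blast intro: order_trans)
qed

end
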